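(* Let $p$ be a random partition and let $\mathrm{Sh}^p$ be its $p$-Shapley value, $$\mathrm{Sh}^p_i(w)=\sum_{(T,\tau)\in\mathcal{E}(N\setminus\{i\})}\Big(p_N(\{T\cup\{i\}\}\cup\tau)\,w(T\cup\{i\},\tau)-\frac{t}{n-t}\sum_{B\in\tau\cup\{\emptyset\}}p_N(\{T\}\cup\tau_{+i\leadsto B})\,w(T,\tau_{+i\leadsto B})\Big)$$ for $N\subseteq\mathbf{U}$, $w\in\mathbb{W}(N)$, $i\in N$. Then $\mathrm{Sh}^p$ satisfies monotonicity if and only if $p=p^\star$, i.e., if and only if $\mathrm{Sh}^p=\mathrm{MPW}$.
   Context: $\mathbf{U}$ is a finite set of players; cardinalities of $N,S,T,B$ are $n,s,t,b$. $\Pi(N)$ is the set of partitions of $N$ ($\Pi(\emptyset)=\{\emptyset\}$). A random partition is $p=(p_N)_{N\subseteq\mathbf{U}}$ with $p_N$ a probability distribution on $\Pi(N)$; $p^\star$ is the Ewens distribution $p^\star_N(\pi)=\frac{\prod_{B\in\pi}(b-1)!}{n!}$. $\pi_{+i\leadsto B}=(\pi\setminus\{B\})\cup\{B\cup\{i\}\}$ for $B\in\pi$, $\pi_{+i\leadsto\emptyset}=\pi\cup\{\{i\}\}$. Embedded coalitions $\mathcal{E}(N)=\{(S,\pi):S\subseteq N,\pi\in\Pi(N\setminus S)\}$; a TUX game on $N$ is $w:\mathcal{E}(N)\to\mathbb{R}$ with $w(\emptyset,\pi)=0$; $\mathbb{W}(N)$ their set. A solution $\varphi$ (assigning $\varphi(w)\in\mathbb{R}^N$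 to each $w\in\mathbb{W}(N)$) satisfies monotonicity if for all $N$, $w,z\in\mathbb{W}(N)$ and $i\in N$ with $w(S\cup\{i\},\pi)-w(S,\pi_{+i\leadsto B})\ge z(S\cup\{i\},\pi)-z(S,\pi_{+i\leadsto B})$ for all $(S,\pi)\in\mathcal{E}(N\setminus\{i\})$ and $B\in\pi\cup\{\emptyset\}$, we have $\varphi_i(w)\ge\varphi_i(z)$. The Shapley value of a TU game $v$ is $\mathrm{Sh}_i(v)=\sum_{S\subseteq N\setminus\{i\}}\frac{s!(n-s-1)!}{n!}(v(S\cup\{i\})-v(S))$; the MPW solution is $\mathrm{MPW}(w)=\mathrm{Sh}(\bar v^\star_w)$ with $\bar v^\star_w(S)=\sum_{\pi\in\Pi(N\setminus S)}p^\star_{N\setminus S}(\pi)w(S,\pi)$. *)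

theory Defs
  imports Complex_Main "HOL-Library.Disjoint_Sets"
begin

text \<open>Partitions of N (Pi(N)); Pi({}) = {{}}.\<close>
definition partitions :: "'a set \<Rightarrow> 'a set set set" where
  "partitions N = {P. partition_on N P}"

definition emb :: "'a set \<Rightarrow> ('a set \<times> 'a set set) set" where
  "emb N = {(S, P). S \<subseteq> N \<and> P \<in> partitions (N - S)}"

text \<open>pi_{+i ~> B}; B = {} means adding the singleton {i}.\<close>
definition add_to :: "'a set set \<Rightarrow> 'a \<Rightarrow> 'a set \<Rightarrow> 'a set set" where
  "add_to P i B = (if B = {} then insert {i} P else insert (insert i B) (P - {B}))"

definition random_partition :: "'a set \<Rightarrow> ('a set \<Rightarrow> 'a set set \<Rightarrow> real) \<Rightarrow> bool" where
  "random_partition U p \<longleftrightarrow>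
     (\<forall>N. N \<subseteq> U \<longrightarrow> (\<forall>P\<in>partitions N. p N P \<ge> 0) \<and> (\<Sum>P\<in>partitions N. p N P) = 1)"

definition ewens :: "'a set \<Rightarrow> 'a set set \<Rightarrow> real" where
  "ewens N P = (\<Prod>B\<in>P. fact (card B - 1)) / fact (card N)"

definition same_rp :: "'a set \<Rightarrow> ('a set \<Rightarrow> 'a set set \<Rightarrow> real) \<Rightarrow> ('a set \<Rightarrow> 'a set set \<Rightarrow> real) \<Rightarrow> bool" where
  "same_rp U p q \<longleftrightarrow> (\<forall>N. N \<subseteq> U \<longrightarrow> (\<forall>P\<in>partitions N. p N P = q N P))"

text \<open>TUX games on N: w (S, pi) with w({}, pi) = 0. Values outside E(N) are irrelevant.\<close>
definition tux_game :: "'a set \<Rightarrow> ('a set \<Rightarrow> 'a set set \<Rightarrow> real) \<Rightarrow> bool" where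
  "tux_game N w \<longleftrightarrow> (\<forall>P\<in>partitions N. w {} P = 0)"

text \<open>A solution: phi N w i is the payoff of i in game w on N.\<close>
type_synonym 'a solution = "'a set \<Rightarrow> ('a set \<Rightarrow> 'a set set \<Rightarrow> real) \<Rightarrow> 'a \<Rightarrow> real"

definition monotonicity :: "'a set \<Rightarrow> 'a solution \<Rightarrow> bool" where
  "monotonicity U phi \<longleftrightarrow>
    (\<forall>N w z i. N \<subseteq> U \<longrightarrow> tux_game N w \<longrightarrow> tux_game N z \<longrightarrow> i \<in> N \<longrightarrow>
       (\<forall>(S, P)\<in>emb (N - {i}). \<forall>B\<in>insert {} P.
          w (insert i S) P - w S (add_to P i B) \<ge> z (insert i S) P - z S (add_to P i B)) \<longrightarrow>
       phi N w i \<ge> phi N z i)"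

definition same_solution :: "'a set \<Rightarrow> 'a solution \<Rightarrow> 'a solution \<Rightarrow> bool" where
  "same_solution U phi psi \<longleftrightarrow>
    (\<forall>N w i. N \<subseteq> U \<longrightarrow> tux_game N w \<longrightarrow> i \<in> N \<longrightarrow> phi N w i = psi N w i)"

definition p_shapley :: "('a set \<Rightarrow> 'a set set \<Rightarrow> real) \<Rightarrow> 'a solution" where
  "p_shapley p N w i =
    (\<Sum>(T, P)\<in>emb (N - {i}).
       p N (insert (insert i T) P) * w (insert i T) P
       - real (card T) / (real (card N) - real (card T)) *
         (\<Sum>B\<in>insert {} P. p N (insert T (add_to P i B)) * w T (add_to P i B)))"

definition shapley :: "'a set \<Rightarrow> ('a set \<Rightarrow> real) \<Rightarrow> 'a \<Rightarrow> real" where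
  "shapley N v i =
    (\<Sum>S\<in>Pow (N - {i}). fact (card S) * fact (card N - card S - 1) / fact (card N)
        * (v (insert i S) - v S))"

definition MPW :: "'a solution" where
  "MPW N w i = shapley N (\<lambda>S. \<Sum>P\<in>partitions (N - S). ewens (N - S) P * w S P) i"

end

theory Submission
  imports Defs
begin

(* MPW is monotone because MPW_i(w) is a nonnegative combination of the marginal
   contributions w(S u {i}, pi) - w(S, pi_{+i~>B}): summing the Ewens weights of the partitions
   pi_{+i~>B} over B gives back the Ewens weight of pi. For p = p* the p-Shapley value agrees
   with MPW coalition by coalition.
   Conversely, monotonicity forces Sh^p_i to vanish on the indicator game of
   {(S u {i}, pi)} u {(S, pi_{+i~>B}) | B}, whose marginal contributions for i all vanish; this is the
   balance equation p_N({S u {i}} u pi) = s/(n-s) sum_B p_N({S} u pi_{+i~>B}), which p* satisfies too.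
   So at any partition with a non-singleton block the ratio p_N/p*_N is a weighted mean of its
   values at partitions with at least as many blocks, with positive weight on one with strictly
   more. By a maximum principle the ratio is constant, and normalisation makes it 1. *)

section \<open>Adding a player to a partition\<close>

(* Together they invert (P, B) \<mapsto> add_to P i B; companions Q i is {} exactly when {i} is a block of Q. *)
definition remove_point :: "'a set set \<Rightarrow> 'a \<Rightarrow> 'a set set" where
  "remove_point Q i = (\<lambda>C. C - {i}) ` Q - {{}}"

definition companions :: "'a set set \<Rightarrow> 'a \<Rightarrow> 'a set" where
  "companions Q i = \<Union>{C\<in>Q. i \<in> C} - {i}"

lemma partition_on_block_unique:
  assumes "partition_on A Q" "C \<in> Q" "D \<in> Q" "x \<in> C" "x \<in> D"
  shows "C = D"
  using assms by (meson disjnt_iff partition_onD2 pairwiseD)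

lemma partition_on_Diff_block:
  assumes "partition_on A Q" "C \<in> Q"
  shows "partition_on (A - C) (Q - {C})"
proof -
  have "disjnt C (\<Union>(Q - {C}))"
    using partition_on_block_unique[OF assms] by (auto simp: disjnt_def)
  then show ?thesis
    using partition_on_insert[of C "Q - {C}" A] assms by (simp add: insert_absorb)
qed

lemma partition_on_insert_block:
  assumes "partition_on (A - C) P" "C \<subseteq> A" "C \<noteq> {}"
  shows "partition_on A (insert C P)"
proof -
  have "disjnt C (\<Union>P)"
    using partition_onD1[OF assms(1)] by (auto simp: disjnt_def)
  then show ?thesis using partition_on_insert assms by blast
qed

lemma partition_on_add_to:
  assumes P: "partition_on A P" and i: "i \<notin> A" and B: "B \<in> insert {} P"
  shows "partition_on (insert i A) (add_to P i B)"
proof (cases "B = {}")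
  case True
  have "insert i A - {i} = A" using i by blast
  then show ?thesis
    using partition_on_insert_block[of "insert i A" "{i}" P] P True by (simp add: add_to_def)
next
  case False
  then have "B \<in> P" using B by blast
  then have "partition_on (A - B) (P - {B})" "B \<subseteq> A"
    using partition_on_Diff_block[OF P] partition_onD1[OF P] by auto
  moreover have "insert i A - insert i B = A - B" using i by blast
  ultimately have "partition_on (insert i A) (insert (insert i B) (P - {B}))"
    by (intro partition_on_insert_block) auto
  then show ?thesis using False by (simp add: add_to_def)
qed

lemma
  assumes P: "partition_on A P" and i: "i \<notin> A" and B: "B \<in> insert {} P"
  shows remove_point_add_to: "remove_point (add_to P i B) i = P"
    and companions_add_to: "companions (add_to P i B) i = B"
proof -
  have iP: "i \<notin> C" if "C \<in> P" for C using that P i partition_onD1 by blast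
  have "{} \<notin> P" using P partition_onD3 by blast
  moreover have "(\<lambda>C. C - {i}) ` P = P" using iP by (force simp: image_iff)
  moreover have "i \<notin> B" using B iP by blast
  ultimately show "remove_point (add_to P i B) i = P" "companions (add_to P i B) i = B"
    using iP B by (auto simp: remove_point_def companions_def add_to_def)
qed

lemma partition_on_remove_point:
  assumes "partition_on (insert i A) Q" "i \<notin> A"
  shows "partition_on A (remove_point Q i)"
proof -
  have "partition_on ((\<lambda>C. C - {i}) (insert i A)) (remove_point Q i)"
    unfolding remove_point_def
  proof (rule partition_on_transform[OF assms(1)])
    show "\<Union>((\<lambda>C. C - {i}) ` Q) = \<Union>Q - {i}" by blast
    show "disjnt (p - {i}) (q - {i})" if "disjnt p q" for p q
      using that by (auto simp: disjnt_iff)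
  qed
  then show ?thesis using assms(2) by simp
qed

lemma
  assumes Q: "partition_on (insert i A) Q" and i: "i \<notin> A"
  shows companions_in_remove_point: "companions Q i \<noteq> {} \<Longrightarrow> companions Q i \<in> remove_point Q i"
    and add_to_remove_point: "add_to (remove_point Q i) i (companions Q i) = Q"
proof -
  obtain C where C: "C \<in> Q" "i \<in> C" using partition_onD1[OF Q] by blast
  have uniq: "D = C" if "D \<in> Q" "i \<in> D" for D
    using partition_on_block_unique[OF Q that(1) C(1) that(2) C(2)] .
  have comp: "companions Q i = C - {i}"
    unfolding companions_def using uniq C by blast
  have "D - {i} = D" if "D \<in> Q - {C}" for D
    using uniq that by blast
  then have others: "(\<lambda>D. D - {i}) ` (Q - {C}) = Q - {C}"
    by simp
  have "(\<lambda>D. D - {i}) ` Q = insert (C - {i}) (Q - {C})"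
    using C(1) others by (metis image_insert insert_Diff)
  moreover have "{} \<notin> Q" using partition_onD3[OF Q] .
  ultimately have rem: "remove_point Q i = (Q - {C}) \<union> (if C = {i} then {} else {C - {i}})"
    using C(2) unfolding remove_point_def by auto
  show "companions Q i \<in> remove_point Q i" if "companions Q i \<noteq> {}"
    using that comp rem by auto
  have "C - {i} \<notin> Q - {C}" if nonsingleton: "C \<noteq> {i}"
  proof
    assume "C - {i} \<in> Q - {C}"
    moreover obtain x where "x \<in> C - {i}" using nonsingleton C(2) by blast
    ultimately show False
      using partition_on_block_unique[OF Q _ C(1), of "C - {i}" x] C(2) by blast
  qed
  then show "add_to (remove_point Q i) i (companions Q i) = Q"
    using comp rem C by (cases "C = {i}") (auto simp: add_to_def insert_absorb)
qed

lemma finite_partitions: "finite A \<Longrightarrow> finite (partitions A)"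
  by (simp add: partitions_def finitely_many_partition_on)

lemma bij_betw_add_to:
  assumes "i \<notin> A"
  shows "bij_betw (\<lambda>(P, B). add_to P i B) (SIGMA P:partitions A. insert {} P) (partitions (insert i A))"
proof (rule bij_betw_byWitness[where f' = "\<lambda>Q. (remove_point Q i, companions Q i)"])
  show "(\<lambda>Q. (remove_point Q i, companions Q i)) ` partitions (insert i A)
      \<subseteq> (SIGMA P:partitions A. insert {} P)"
    using assms partition_on_remove_point companions_in_remove_point
    by (fastforce simp: partitions_def)
qed (use assms in \<open>auto simp: partitions_def remove_point_add_to companions_add_to
       partition_on_add_to add_to_remove_point\<close>)

lemma sum_partitions_insert:
  assumes "finite A" "i \<notin> A"
  shows "(\<Sum>Q\<in>partitions (insert i A). g Q) = (\<Sum>P\<in>partitions A. \<Sum>B\<in>insert {} P. g (add_to P i B))"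
proof -
  have "finite (insert {} P)" if "P \<in> partitions A" for P
    using that assms(1) finite_elements by (auto simp: partitions_def)
  then show ?thesis
    using sum.reindex_bij_betw[OF bij_betw_add_to[OF assms(2)], of g]
      sum.Sigma[OF finite_partitions[OF assms(1)], of "insert {}" "\<lambda>P B. g (add_to P i B)"]
    by (simp add: split_def)
qed

lemma finite_block: "finite A \<Longrightarrow> partition_on A P \<Longrightarrow> B \<in> P \<Longrightarrow> finite B"
  by (metis Union_upper partition_onD1 rev_finite_subset)

section \<open>The Ewens distribution\<close>

definition block_weight :: "'a set \<Rightarrow> real" where
  "block_weight B = (if B = {} then 1 else real (card B))"

lemma sum_block_weight:
  assumes "finite A" "partition_on A P"
  shows "(\<Sum>B\<in>insert {} P. block_weight B) = real (card A) + 1"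
proof -
  have "finite P" "{} \<notin> P" "\<And>B. B \<in> P \<Longrightarrow> finite B"
    using assms finite_elements partition_onD3 finite_block by blast+
  moreover have "real (card A) = (\<Sum>B\<in>P. real (card B))"
    using product_partition[OF assms(2)] calculation(3) by simp
  ultimately show ?thesis
    by (auto simp: block_weight_def intro!: sum.cong)
qed

lemma ewens_add_to:
  assumes A: "finite A" and P: "partition_on A P" and i: "i \<notin> A" and B: "B \<in> insert {} P"
  shows "ewens (insert i A) (add_to P i B) = ewens A P * block_weight B / (real (card A) + 1)"
proof -
  have fin: "finite P" using A P finite_elements by blast
  have iP: "i \<notin> C" if "C \<in> P" for C using that P i partition_onD1 by blast
  have "(\<Prod>D\<in>add_to P i B. fact (card D - 1) :: real) = (\<Prod>D\<in>P. fact (card D - 1)) * block_weight B"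
  proof (cases "B = {}")
    case True
    moreover have "{i} \<notin> P" using iP by blast
    ultimately show ?thesis using fin by (simp add: add_to_def block_weight_def)
  next
    case False
    with B have BP: "B \<in> P" by blast
    then have "finite B" "i \<notin> B" using finite_block[OF A P] iP by auto
    moreover have "insert i B \<notin> P - {B}" using iP by blast
    moreover have "fact (card B) = real (card B) * fact (card B - 1)"
      using False \<open>finite B\<close> by (simp add: fact_reduce card_gt_0_iff)
    ultimately show ?thesis
      using False fin BP by (simp add: add_to_def block_weight_def prod.remove)
  qed
  moreover have "fact (card (insert i A)) = (real (card A) + 1) * fact (card A)"
    using A i by simp
  ultimately show ?thesis by (simp add: ewens_def)
qed

lemma ewens_marginal:
  assumes "finite A" "partition_on A P" "i \<notin> A"
  shows "(\<Sum>B\<in>insert {} P. ewens (insert i A) (add_to P i B)) = ewens A P"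
proof -
  have "(\<Sum>B\<in>insert {} P. ewens (insert i A) (add_to P i B))
      = ewens A P / (real (card A) + 1) * (\<Sum>B\<in>insert {} P. block_weight B)"
    using assms by (simp add: ewens_add_to sum_distrib_left)
  then show ?thesis using sum_block_weight[OF assms(1,2)] by simp
qed

lemma sum_ewens: "finite A \<Longrightarrow> (\<Sum>Q\<in>partitions A. ewens A Q) = 1"
proof (induction A rule: finite_induct)
  case empty
  have "partitions {} = {{} :: 'a set set}" by (simp add: partitions_def partition_on_empty)
  then show ?case by (simp add: ewens_def)
next
  case (insert i A)
  have "(\<Sum>Q\<in>partitions (insert i A). ewens (insert i A) Q)
      = (\<Sum>P\<in>partitions A. \<Sum>B\<in>insert {} P. ewens (insert i A) (add_to P i B))"
    using insert.hyps by (rule sum_partitions_insert)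
  also have "\<dots> = (\<Sum>P\<in>partitions A. ewens A P)"
    using insert.hyps by (intro sum.cong) (auto simp: ewens_marginal partitions_def)
  finally show ?case using insert.IH by simp
qed

lemma ewens_pos: "finite A \<Longrightarrow> partition_on A Q \<Longrightarrow> 0 < ewens A Q"
  unfolding ewens_def by (intro divide_pos_pos prod_pos) auto

lemma ewens_insert_block:
  assumes N: "finite N" and Q: "partition_on (N - T) Q" and T: "T \<subseteq> N" "T \<noteq> {}"
  shows "ewens N (insert T Q) = fact (card T - 1) * fact (card N - card T) / fact (card N) * ewens (N - T) Q"
proof -
  have "finite Q" using N Q finite_elements by blast
  moreover have "T \<notin> Q" using Q T partition_onD1 by blast
  moreover have "card (N - T) = card N - card T"
    using N T finite_subset card_Diff_subset by metis
  ultimately show ?thesis by (simp add: ewens_def)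
qed

section \<open>The MPW solution and the Ewens p-Shapley value\<close>

lemma MPW_eq_sum_marginal_contributions:
  assumes N: "finite N" and i: "i \<in> N"
  shows "MPW N w i = (\<Sum>S\<in>Pow (N - {i}). \<Sum>P\<in>partitions (N - {i} - S). \<Sum>B\<in>insert {} P.
      fact (card S) * fact (card N - card S - 1) / fact (card N) * ewens (N - S) (add_to P i B)
      * (w (insert i S) P - w S (add_to P i B)))"
  unfolding MPW_def shapley_def
proof (rule sum.cong[OF refl], goal_cases)
  case (1 S)
  define A where "A = N - {i} - S"
  have A: "finite A" "i \<notin> A" using N by (auto simp: A_def)
  have NiS: "N - insert i S = A" and NS: "N - S = insert i A"
    using 1 i by (auto simp: A_def)
  let ?e = "\<lambda>P B. ewens (insert i A) (add_to P i B)"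
  have marginal: "(\<Sum>P\<in>partitions A. ewens A P * w (insert i S) P)
      = (\<Sum>P\<in>partitions A. \<Sum>B\<in>insert {} P. ?e P B * w (insert i S) P)"
    using A by (intro sum.cong) (auto simp: ewens_marginal partitions_def sum_distrib_right[symmetric])
  have reindex: "(\<Sum>Q\<in>partitions (insert i A). ewens (insert i A) Q * w S Q)
      = (\<Sum>P\<in>partitions A. \<Sum>B\<in>insert {} P. ?e P B * w S (add_to P i B))"
    using A by (rule sum_partitions_insert)
  show ?case
    unfolding NiS NS A_def[symmetric]
    by (simp only: marginal reindex sum_distrib_left sum_subtractf[symmetric] right_diff_distrib mult.assoc)
qed

lemma monotonicity_MPW:
  assumes "finite U"
  shows "monotonicity U MPW"
  unfolding monotonicity_def
proof (intro allI impI)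
  fix N i and w z :: "'a set \<Rightarrow> 'a set set \<Rightarrow> real"
  assume "N \<subseteq> U" "i \<in> N" and contrib: "\<forall>(S, P)\<in>emb (N - {i}). \<forall>B\<in>insert {} P.
      z (insert i S) P - z S (add_to P i B) \<le> w (insert i S) P - w S (add_to P i B)"
  then have N: "finite N" using assms finite_subset by blast
  show "MPW N z i \<le> MPW N w i"
    unfolding MPW_eq_sum_marginal_contributions[OF N \<open>i \<in> N\<close>]
  proof (intro sum_mono mult_left_mono)
    fix S P B assume S: "S \<in> Pow (N - {i})" and P: "P \<in> partitions (N - {i} - S)"
      and B: "B \<in> insert {} P"
    then show "z (insert i S) P - z S (add_to P i B) \<le> w (insert i S) P - w S (add_to P i B)"
      using contrib by (auto simp: emb_def)
    have "insert i (N - {i} - S) = N - S" using S \<open>i \<in> N\<close> by auto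
    then have "partition_on (N - S) (add_to P i B)"
      using partition_on_add_to[of "N - {i} - S" P i B] P B by (simp add: partitions_def)
    then show "0 \<le> fact (card S) * fact (card N - card S - 1) / fact (card N) * ewens (N - S) (add_to P i B)"
      using N ewens_pos[of "N - S"] by (simp add: less_imp_le)
  qed
qed

lemma emb_eq_Sigma: "emb N = (SIGMA T:Pow N. partitions (N - T))"
  by (auto simp: emb_def)

lemma p_shapley_eq_sum_coalitions:
  assumes N: "finite N" and i: "i \<in> N"
  shows "p_shapley p N w i = (\<Sum>T\<in>Pow (N - {i}).
      (\<Sum>P\<in>partitions (N - insert i T). p N (insert (insert i T) P) * w (insert i T) P)
      - real (card T) / (real (card N) - real (card T)) * (\<Sum>Q\<in>partitions (N - T). p N (insert T Q) * w T Q))"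
    (is "_ = (\<Sum>T\<in>_. ?rhs T)")
proof -
  have "p_shapley p N w i = (\<Sum>T\<in>Pow (N - {i}). \<Sum>P\<in>partitions (N - {i} - T).
      p N (insert (insert i T) P) * w (insert i T) P
      - real (card T) / (real (card N) - real (card T)) *
        (\<Sum>B\<in>insert {} P. p N (insert T (add_to P i B)) * w T (add_to P i B)))"
    unfolding p_shapley_def emb_eq_Sigma using N
    by (subst sum.Sigma) (auto simp: finite_partitions)
  also have "\<dots> = (\<Sum>T\<in>Pow (N - {i}). ?rhs T)"
  proof (rule sum.cong[OF refl], goal_cases)
    case (1 T)
    define A where "A = N - {i} - T"
    have "N - insert i T = A" "N - T = insert i A" using 1 i by (auto simp: A_def)
    moreover have A: "finite A" "i \<notin> A" using N by (auto simp: A_def)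
    ultimately show ?case
      unfolding A_def[symmetric]
      by (simp only: sum_partitions_insert[OF A] sum_subtractf sum_distrib_left)
  qed
  finally show ?thesis .
qed

lemma card_subset_Diff_bounds:
  assumes "finite N" "i \<in> N" "S \<subseteq> N - {i}" "S \<noteq> {}"
  shows "0 < card S" "card S < card N"
  using assms finite_subset[of S N] by (auto simp: card_gt_0_iff intro: psubset_card_mono)

lemma ewens_insert_player_block:
  assumes N: "finite N" and i: "i \<in> N" and T: "T \<subseteq> N - {i}" and P: "partition_on (N - insert i T) P"
  shows "ewens N (insert (insert i T) P)
    = fact (card T) * fact (card N - card T - 1) / fact (card N) * ewens (N - insert i T) P"
proof -
  have "finite T" "i \<notin> T" using N T finite_subset by auto
  moreover have sub: "insert i T \<subseteq> N" using T i by blast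
  moreover have "card (insert i T) \<le> card N" using N sub by (rule card_mono)
  ultimately show ?thesis
    using ewens_insert_block[OF N P sub] by simp
qed

lemma ewens_insert_block_scaled:
  assumes N: "finite N" and i: "i \<in> N" and T: "T \<subseteq> N - {i}" "T \<noteq> {}" and Q: "partition_on (N - T) Q"
  shows "real (card T) / (real (card N) - real (card T)) * ewens N (insert T Q)
    = fact (card T) * fact (card N - card T - 1) / fact (card N) * ewens (N - T) Q"
proof -
  let ?t = "card T" and ?n = "card N"
  have "0 < ?t" "?t < ?n" using card_subset_Diff_bounds[OF N i T] .
  then have t: "real ?t * fact (?t - 1) = fact ?t"
    and nt: "fact (?n - ?t) / (real ?n - real ?t) = fact (?n - ?t - 1)"
    by (simp_all add: fact_reduce[of ?t] fact_reduce[of "?n - ?t"] of_nat_diff)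
  have "ewens N (insert T Q) = fact (?t - 1) * fact (?n - ?t) / fact ?n * ewens (N - T) Q"
    using ewens_insert_block[OF N Q] T by auto
  then have "real ?t / (real ?n - real ?t) * ewens N (insert T Q)
      = (real ?t * fact (?t - 1)) * (fact (?n - ?t) / (real ?n - real ?t)) / fact ?n * ewens (N - T) Q"
    by (simp only: divide_inverse mult_ac)
  then show ?thesis unfolding t nt .
qed

lemma p_shapley_eq_MPW_if_ewens:
  assumes N: "finite N" and i: "i \<in> N" and w: "tux_game N w"
    and p: "\<forall>Q\<in>partitions N. p N Q = ewens N Q"
  shows "p_shapley p N w i = MPW N w i"
  unfolding p_shapley_eq_sum_coalitions[OF N i] MPW_def shapley_def
proof (rule sum.cong[OF refl], goal_cases)
  case (1 T)
  then have T: "T \<subseteq> N - {i}" by simp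
  let ?c = "fact (card T) * fact (card N - card T - 1) / fact (card N) :: real"
  have player_block: "(\<Sum>P\<in>partitions (N - insert i T). p N (insert (insert i T) P) * w (insert i T) P)
      = ?c * (\<Sum>P\<in>partitions (N - insert i T). ewens (N - insert i T) P * w (insert i T) P)"
    unfolding sum_distrib_left
  proof (rule sum.cong[OF refl])
    fix P assume "P \<in> partitions (N - insert i T)"
    then have P: "partition_on (N - insert i T) P" by (simp add: partitions_def)
    then have "insert (insert i T) P \<in> partitions N"
      using T i partition_on_insert_block by (fastforce simp: partitions_def)
    then show "p N (insert (insert i T) P) * w (insert i T) P
        = ?c * (ewens (N - insert i T) P * w (insert i T) P)"
      using p ewens_insert_player_block[OF N i T P] by simp
  qed
  have other_block: "real (card T) / (real (card N) - real (card T))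
        * (\<Sum>Q\<in>partitions (N - T). p N (insert T Q) * w T Q)
      = ?c * (\<Sum>Q\<in>partitions (N - T). ewens (N - T) Q * w T Q)"
  proof (cases "T = {}")
    case True
    then show ?thesis using w by (simp add: tux_game_def)
  next
    case False
    show ?thesis
      unfolding sum_distrib_left
    proof (rule sum.cong[OF refl])
      fix Q assume "Q \<in> partitions (N - T)"
      then have Q: "partition_on (N - T) Q" by (simp add: partitions_def)
      then have "insert T Q \<in> partitions N"
        using T False partition_on_insert_block by (fastforce simp: partitions_def)
      then show "real (card T) / (real (card N) - real (card T)) * (p N (insert T Q) * w T Q)
          = ?c * (ewens (N - T) Q * w T Q)"
        using p ewens_insert_block_scaled[OF N i T False Q] by (simp add: mult.assoc[symmetric])
    qed
  qed
  show ?case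
    unfolding player_block other_block by (rule right_diff_distrib[symmetric])
qed

lemma same_rp_imp_same_solution:
  assumes "finite U" "same_rp U p ewens"
  shows "same_solution U (p_shapley p) MPW"
  using assms p_shapley_eq_MPW_if_ewens finite_subset
  unfolding same_solution_def same_rp_def by metis

lemma same_solution_imp_monotonicity_iff:
  assumes "same_solution U \<phi> \<psi>"
  shows "monotonicity U \<phi> \<longleftrightarrow> monotonicity U \<psi>"
proof -
  have "\<phi> N w i = \<psi> N w i" if "N \<subseteq> U" "tux_game N w" "i \<in> N" for N w i
    using assms that unfolding same_solution_def by blast
  then show ?thesis unfolding monotonicity_def by auto
qed

lemma monotonicity_p_shapley_ewens:
  assumes "finite U"
  shows "monotonicity U (p_shapley ewens)"
proof -
  have "same_solution U (p_shapley ewens) MPW"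
    using assms by (rule same_rp_imp_same_solution) (simp add: same_rp_def)
  then show ?thesis
    using same_solution_imp_monotonicity_iff monotonicity_MPW[OF assms] by blast
qed

section \<open>Monotonicity forces the Ewens distribution\<close>

lemma monotonicity_imp_eq_if_equal_contributions:
  assumes "monotonicity U \<phi>" "N \<subseteq> U" "i \<in> N" "tux_game N w" "tux_game N z"
    and "\<And>S P B. (S, P) \<in> emb (N - {i}) \<Longrightarrow> B \<in> insert {} P \<Longrightarrow>
      w (insert i S) P - w S (add_to P i B) = z (insert i S) P - z S (add_to P i B)"
  shows "\<phi> N w i = \<phi> N z i"
proof -
  have mono: "\<phi> N w' i \<le> \<phi> N w i"
    if "tux_game N w" "tux_game N w'" "\<forall>(S, P)\<in>emb (N - {i}). \<forall>B\<in>insert {} P.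
      w' (insert i S) P - w' S (add_to P i B) \<le> w (insert i S) P - w S (add_to P i B)" for w w'
    using assms(1-3) that unfolding monotonicity_def by blast
  show ?thesis
    by (intro antisym mono) (use assms(4-6) in auto)
qed

(* Every marginal contribution of i vanishes in this game, while its p-Shapley value for i is
   the defect of the balance equation at (i, S, P). *)
definition balance_game :: "'a \<Rightarrow> 'a set \<Rightarrow> 'a set set \<Rightarrow> 'a set \<Rightarrow> 'a set set \<Rightarrow> real" where
  "balance_game i S P T R =
    (if T = insert i S \<and> R = P then 1 else 0) + (if T = S \<and> remove_point R i = P then 1 else 0)"

lemma balance_game_insert_player:
  "i \<notin> T \<Longrightarrow> i \<notin> S \<Longrightarrow> balance_game i S P (insert i T) P' = (if (T, P') = (S, P) then 1 else 0)"
  by (auto simp: balance_game_def insert_ident)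

lemma balance_game_add_to:
  assumes "(T, P') \<in> emb (N - {i})" "B \<in> insert {} P'"
  shows "balance_game i S P T (add_to P' i B) = (if (T, P') = (S, P) then 1 else 0)"
  using assms remove_point_add_to[of "N - {i} - T" P' i B]
  by (auto simp: balance_game_def emb_def partitions_def)

lemma p_shapley_balance_game:
  assumes N: "finite N" and S: "S \<subseteq> N - {i}" and P: "partition_on (N - insert i S) P"
  shows "p_shapley p N (balance_game i S P) i = p N (insert (insert i S) P)
    - real (card S) / (real (card N) - real (card S)) * (\<Sum>B\<in>insert {} P. p N (insert S (add_to P i B)))"
    (is "_ = ?G")
proof -
  have "p_shapley p N (balance_game i S P) i = (\<Sum>x\<in>emb (N - {i}). if x = (S, P) then ?G else 0)"
    unfolding p_shapley_def
  proof (intro sum.cong refl, clarify)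
    fix T P' assume TP': "(T, P') \<in> emb (N - {i})"
    have iS: "i \<notin> S" and iT: "i \<notin> T" using S TP' by (auto simp: emb_def)
    show "p N (insert (insert i T) P') * balance_game i S P (insert i T) P'
      - real (card T) / (real (card N) - real (card T))
        * (\<Sum>B\<in>insert {} P'. p N (insert T (add_to P' i B)) * balance_game i S P T (add_to P' i B))
      = (if (T, P') = (S, P) then ?G else 0)"
      using balance_game_insert_player[OF iT iS] balance_game_add_to[OF TP']
      by (cases "(T, P') = (S, P)") auto
  qed
  moreover have "(S, P) \<in> emb (N - {i})"
    using S P by (simp add: emb_def partitions_def Diff_insert2[symmetric])
  moreover have "finite (emb (N - {i}))" using N by (simp add: emb_eq_Sigma finite_partitions)
  ultimately show ?thesis by (simp add: sum.delta)
qed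

lemma monotonicity_p_shapley_imp_balance:
  assumes mono: "monotonicity U (p_shapley p)" and N: "finite N" "N \<subseteq> U" and i: "i \<in> N"
    and S: "S \<subseteq> N - {i}" "S \<noteq> {}" and P: "partition_on (N - insert i S) P"
  shows "p N (insert (insert i S) P)
    = real (card S) / (real (card N) - real (card S)) * (\<Sum>B\<in>insert {} P. p N (insert S (add_to P i B)))"
proof -
  have "0 = p_shapley p N (\<lambda>_ _. 0) i" by (simp add: p_shapley_def)
  also have "\<dots> = p_shapley p N (balance_game i S P) i"
  proof (rule monotonicity_imp_eq_if_equal_contributions[OF mono N(2) i, symmetric])
    show "tux_game N (balance_game i S P)" "tux_game N (\<lambda>_ _. 0)"
      using S by (auto simp: tux_game_def balance_game_def)
    show "balance_game i S P (insert i T) P' - balance_game i S P T (add_to P' i B) = 0 - 0"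
      if "(T, P') \<in> emb (N - {i})" "B \<in> insert {} P'" for T P' B
    proof -
      have iS: "i \<notin> S" and iT: "i \<notin> T" using S that(1) by (auto simp: emb_def)
      then show ?thesis using balance_game_insert_player[OF iT iS] balance_game_add_to[OF that] by simp
    qed
  qed
  also have "\<dots> = p N (insert (insert i S) P)
    - real (card S) / (real (card N) - real (card S)) * (\<Sum>B\<in>insert {} P. p N (insert S (add_to P i B)))"
    using N(1) S(1) P by (rule p_shapley_balance_game)
  finally show ?thesis by simp
qed

lemma weighted_mean_eq_upper_bound:
  fixes a y :: "'c \<Rightarrow> real"
  assumes "finite I" "j \<in> I" "0 < a j" "\<forall>k\<in>I. 0 \<le> a k \<and> y k \<le> x"
    and "sum a I = 1" "x = (\<Sum>k\<in>I. a k * y k)"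
  shows "y j = x"
proof -
  have "(\<Sum>k\<in>I. a k * (x - y k)) = x * sum a I - (\<Sum>k\<in>I. a k * y k)"
    by (simp add: algebra_simps sum_subtractf sum_distrib_left)
  also have "\<dots> = 0" using assms(5,6) by simp
  finally have "\<forall>k\<in>I. a k * (x - y k) = 0"
    using assms(1,4) by (subst sum_nonneg_eq_0_iff[symmetric]) auto
  then have "a j * (x - y j) = 0" using assms(2) by blast
  then show ?thesis using assms(3) by simp
qed

lemma mean_value_imp_maximum:
  fixes f :: "'b \<Rightarrow> real" and \<mu> :: "'b \<Rightarrow> nat"
  assumes X: "finite X" and x0: "x0 \<in> X"
    and mean: "\<And>x. x \<in> X \<Longrightarrow> x \<noteq> x0 \<Longrightarrow> \<exists>(I :: 'c set) a y j. finite I \<and> j \<in> I \<and> 0 < a j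
      \<and> (\<forall>k\<in>I. 0 \<le> a k \<and> y k \<in> X) \<and> sum a I = 1 \<and> \<mu> x < \<mu> (y j) \<and> f x = (\<Sum>k\<in>I. a k * f (y k))"
  shows "\<forall>x\<in>X. f x \<le> f x0"
proof -
  define m where "m = Max (f ` X)"
  have le_m: "f x \<le> m" if "x \<in> X" for x using X that by (simp add: m_def)
  define M where "M = {x\<in>X. f x = m}"
  have "m \<in> f ` X" using X x0 unfolding m_def by (intro Max_in) auto
  then have M: "finite M" "M \<noteq> {}" using X by (auto simp: M_def)
  have "Max (\<mu> ` M) \<in> \<mu> ` M" using M by (intro Max_in) auto
  then obtain x1 where x1: "x1 \<in> X" "f x1 = m" "\<mu> x1 = Max (\<mu> ` M)"
    by (auto simp: M_def)
  have "x1 = x0"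
  proof (rule ccontr)
    assume "x1 \<noteq> x0"
    from mean[OF x1(1) this] obtain I :: "'c set" and a y j where mean_x1: "finite I" "j \<in> I" "0 < a j"
      "\<forall>k\<in>I. 0 \<le> a k \<and> y k \<in> X" "sum a I = 1" "\<mu> x1 < \<mu> (y j)" "f x1 = (\<Sum>k\<in>I. a k * f (y k))"
      by blast
    have "\<forall>k\<in>I. 0 \<le> a k \<and> f (y k) \<le> f x1" using mean_x1(4) le_m x1(2) by simp
    then have "f (y j) = f x1" by (rule weighted_mean_eq_upper_bound[OF mean_x1(1-3) _ mean_x1(5,7)])
    then have "y j \<in> M" using mean_x1(2,4) x1(2) by (simp add: M_def)
    then have "\<mu> (y j) \<le> \<mu> x1" using M(1) x1(3) by simp
    then show False using mean_x1(6) by simp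
  qed
  then show ?thesis using x1(2) le_m by simp
qed

lemma mean_value_imp_constant:
  fixes f :: "'b \<Rightarrow> real" and \<mu> :: "'b \<Rightarrow> nat"
  assumes X: "finite X" and x0: "x0 \<in> X"
    and mean: "\<And>x. x \<in> X \<Longrightarrow> x \<noteq> x0 \<Longrightarrow> \<exists>(I :: 'c set) a y j. finite I \<and> j \<in> I \<and> 0 < a j
      \<and> (\<forall>k\<in>I. 0 \<le> a k \<and> y k \<in> X) \<and> sum a I = 1 \<and> \<mu> x < \<mu> (y j) \<and> f x = (\<Sum>k\<in>I. a k * f (y k))"
  shows "\<forall>x\<in>X. f x = f x0"
proof -
  have "\<forall>x\<in>X. f x \<le> f x0"
    using mean_value_imp_maximum[OF X x0 mean] by blast
  moreover have "\<forall>x\<in>X. - f x \<le> - f x0"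
    using mean by (intro mean_value_imp_maximum[OF X x0, where \<mu> = \<mu>]) (simp add: sum_negf)
  ultimately show ?thesis by force
qed

lemma partition_on_obtain_nonsingleton_block:
  assumes Q: "partition_on N Q" and "Q \<noteq> (\<lambda>x. {x}) ` N"
  obtains i S P where "i \<in> N" "S \<subseteq> N - {i}" "S \<noteq> {}" "partition_on (N - insert i S) P"
    "Q = insert (insert i S) P"
proof -
  have "\<exists>C\<in>Q. \<not> (\<exists>x. C = {x})"
  proof (rule ccontr)
    assume "\<not> ?thesis"
    then have "Q = (\<lambda>x. {x}) ` \<Union>Q" by force
    then show False using assms partition_onD1 by metis
  qed
  then obtain C i where C: "C \<in> Q" "i \<in> C" "C - {i} \<noteq> {}"
    using partition_onD3[OF Q] by (metis Diff_eq_empty_iff ex_in_conv subset_singletonD)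
  moreover have "C \<subseteq> N" using C(1) partition_onD1[OF Q] by blast
  moreover have "insert i (C - {i}) = C" using C(2) by blast
  ultimately show ?thesis
    using that[of i "C - {i}" "Q - {C}"] partition_on_Diff_block[OF Q C(1)] by (auto simp: insert_absorb)
qed

lemma ratio_eq_weighted_mean:
  fixes c x x' :: real and y y' :: "'c \<Rightarrow> real"
  assumes "0 < x'" "\<forall>k\<in>I. 0 < y' k" "x = c * sum y I" "x' = c * sum y' I"
  shows "x / x' = (\<Sum>k\<in>I. c * y' k / x' * (y k / y' k))"
    and "(\<Sum>k\<in>I. c * y' k / x') = 1"
proof -
  have "(\<Sum>k\<in>I. c * y' k / x' * (y k / y' k)) = (\<Sum>k\<in>I. c * y k / x')"
    using assms(2) by (intro sum.cong) auto
  then show "x / x' = (\<Sum>k\<in>I. c * y' k / x' * (y k / y' k))"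
    using assms(3) by (simp add: sum_divide_distrib sum_distrib_left)
  have "(\<Sum>k\<in>I. c * y' k / x') = c * sum y' I / x'"
    by (simp add: sum_divide_distrib sum_distrib_left)
  also have "\<dots> = 1" using assms(1) by (simp add: assms(4)[symmetric])
  finally show "(\<Sum>k\<in>I. c * y' k / x') = 1" .
qed

lemma
  assumes i: "i \<in> N" and S: "S \<subseteq> N - {i}" "S \<noteq> {}" and P: "partition_on (N - insert i S) P"
  shows partition_on_split_player: "B \<in> insert {} P \<Longrightarrow> partition_on N (insert S (add_to P i B))"
    and card_split_player: "finite N \<Longrightarrow> card (insert (insert i S) P) < card (insert S (add_to P i {}))"
proof -
  have "insert i (N - insert i S) = N - S" using i S by blast
  then have "partition_on (N - S) (add_to P i B)" if "B \<in> insert {} P"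
    using partition_on_add_to[of "N - insert i S" P i B] P that by simp
  then show "partition_on N (insert S (add_to P i B))" if "B \<in> insert {} P"
    using that partition_on_insert_block[of N S] S by blast
  assume "finite N"
  then have "finite P" using P finite_elements by blast
  moreover have "insert i S \<notin> P" "{i} \<notin> P" "S \<notin> insert {i} P"
    using partition_onD1[OF P] S by auto
  ultimately show "card (insert (insert i S) P) < card (insert S (add_to P i {}))"
    by (simp add: add_to_def)
qed

lemma ewens_ratio_mean_value:
  fixes N :: "'a set"
  assumes U: "finite U" and mono: "monotonicity U (p_shapley p)" and NU: "N \<subseteq> U"
    and Q: "Q \<in> partitions N" "Q \<noteq> (\<lambda>x. {x}) ` N"
  shows "\<exists>(I :: 'a set set) a y j. finite I \<and> j \<in> I \<and> 0 < a j
      \<and> (\<forall>k\<in>I. 0 \<le> a k \<and> y k \<in> partitions N) \<and> sum a I = 1 \<and> card Q < card (y j)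
      \<and> p N Q / ewens N Q = (\<Sum>k\<in>I. a k * (p N (y k) / ewens N (y k)))"
proof -
  have N: "finite N" using U NU finite_subset by blast
  have "partition_on N Q" using Q(1) by (simp add: partitions_def)
  then obtain i S P where i: "i \<in> N" and S: "S \<subseteq> N - {i}" "S \<noteq> {}"
    and P: "partition_on (N - insert i S) P" and QiSP: "Q = insert (insert i S) P"
    using Q(2) by (rule partition_on_obtain_nonsingleton_block)
  define y where "y B = insert S (add_to P i B)" for B
  let ?c = "real (card S) / (real (card N) - real (card S))"
  define a where "a B = ?c * ewens N (y B) / ewens N Q" for B
  have y: "\<forall>B\<in>insert {} P. y B \<in> partitions N"
    using partition_on_split_player[OF i S P] by (simp add: y_def partitions_def)
  have "0 < ?c" using card_subset_Diff_bounds[OF N i S] by simp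
  have pos: "0 < ewens N Q" "\<forall>B\<in>insert {} P. 0 < ewens N (y B)"
    using Q(1) y N ewens_pos by (auto simp: partitions_def)
  with \<open>0 < ?c\<close> have a_pos: "\<forall>B\<in>insert {} P. 0 < a B"
    unfolding a_def by (blast intro: divide_pos_pos mult_pos_pos)
  have "p N Q = ?c * (\<Sum>B\<in>insert {} P. p N (y B))"
    unfolding QiSP y_def by (rule monotonicity_p_shapley_imp_balance[OF mono N NU i S P])
  moreover have "ewens N Q = ?c * (\<Sum>B\<in>insert {} P. ewens N (y B))"
    unfolding QiSP y_def
    by (rule monotonicity_p_shapley_imp_balance[OF monotonicity_p_shapley_ewens[OF U] N NU i S P])
  ultimately have "p N Q / ewens N Q = (\<Sum>B\<in>insert {} P. a B * (p N (y B) / ewens N (y B)))"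
    and "sum a (insert {} P) = 1"
    using pos unfolding a_def by (intro ratio_eq_weighted_mean; simp)+
  moreover have "card Q < card (y {})"
    unfolding QiSP y_def using card_split_player[OF i S P N] .
  moreover have "finite (insert {} P)" using N P finite_elements by blast
  ultimately have "finite (insert {} P) \<and> {} \<in> insert {} P \<and> 0 < a {}
      \<and> (\<forall>k\<in>insert {} P. 0 \<le> a k \<and> y k \<in> partitions N) \<and> sum a (insert {} P) = 1
      \<and> card Q < card (y {}) \<and> p N Q / ewens N Q = (\<Sum>k\<in>insert {} P. a k * (p N (y k) / ewens N (y k)))"
    using y a_pos by (simp add: less_imp_le)
  then show ?thesis by blast
qed

lemma monotonicity_p_shapley_imp_ewens:
  assumes U: "finite U" and p: "random_partition U p" and mono: "monotonicity U (p_shapley p)"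
    and NU: "N \<subseteq> U"
  shows "\<forall>Q\<in>partitions N. p N Q = ewens N Q"
proof -
  have N: "finite N" using U NU finite_subset by blast
  define f where "f Q = p N Q / ewens N Q" for Q
  define Q0 where "Q0 = (\<lambda>x. {x}) ` N"
  have Q0: "Q0 \<in> partitions N" by (simp add: Q0_def partitions_def partition_on_singletons)
  have "\<forall>Q\<in>partitions N. f Q = f Q0"
    unfolding f_def Q0_def
    by (rule mean_value_imp_constant[OF finite_partitions[OF N] Q0[unfolded Q0_def], where \<mu> = card])
      (rule ewens_ratio_mean_value[OF U mono NU])
  then have scaled: "p N Q = f Q0 * ewens N Q" if "Q \<in> partitions N" for Q
  proof -
    have "0 < ewens N Q" using that N ewens_pos by (simp add: partitions_def)
    then have "p N Q = f Q * ewens N Q" by (simp add: f_def)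
    then show ?thesis using that \<open>\<forall>Q\<in>partitions N. f Q = f Q0\<close> by simp
  qed
  have "1 = (\<Sum>Q\<in>partitions N. p N Q)" using p NU by (simp add: random_partition_def)
  also have "\<dots> = f Q0" using scaled sum_ewens[OF N] by (simp add: sum_distrib_left[symmetric])
  finally show ?thesis using scaled by simp
qed

theorem corollary3:
  fixes U :: "'a set" and p :: "'a set \<Rightarrow> 'a set set \<Rightarrow> real"
  assumes "finite U" and "random_partition U p"
  shows "(monotonicity U (p_shapley p) \<longleftrightarrow> same_rp U p ewens)
       \<and> (monotonicity U (p_shapley p) \<longleftrightarrow> same_solution U (p_shapley p) MPW)"
proof -
  have "monotonicity U (p_shapley p) \<Longrightarrow> same_rp U p ewens"
    using monotonicity_p_shapley_imp_ewens[OF assms] by (simp add: same_rp_def)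
  moreover have "same_rp U p ewens \<Longrightarrow> same_solution U (p_shapley p) MPW"
    using assms(1) by (rule same_rp_imp_same_solution)
  moreover have "same_solution U (p_shapley p) MPW \<Longrightarrow> monotonicity U (p_shapley p)"
    using same_solution_imp_monotonicity_iff monotonicity_MPW[OF assms(1)] by blast
  ultimately show ?thesis by blast
qed

end
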